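(* Let $F$ be a Banach space and $X=F\oplus F'$, so that $X''=F''\oplus F'''$. Fix $x'',y''\in F''$ and $x''',y'''\in F'''$. If $\tilde\delta_{(x'',x''')}\ast\tilde\delta_{(y'',y''')}=\tilde\delta_{(y'',y''')}\ast\tilde\delta_{(x'',x''')}$, then $\rho(x''')(y'')=\rho(y''')(x'')$, where $\rho:F'''\to F^\perp$ is the canonical projection.
   Context: $F'''=i_{F'}(F')\oplus F^\perp$, where $F^\perp\subseteq F'''$ is the annihilator of the canonical image $i_F(F)\subseteq F''$; $\rho$ is the projection onto $F^\perp$ along $i_{F'}(F')$. $\mathcal{H}_b(X)$ is the Fréchet algebra of entire functions of bounded type on $X$ and $\mathcal{M}_b(X)$ its spectrum. For $f\in\mathcal{H}_b(X)$, $\tilde f\in\mathcal{H}_b(X'')$ is its Aron–Berner extension (multilinear forms extended by iterated weak-star limits from the right variable to the left, polynomials through their symmetric multilinear forms, functions termwise in their Taylor series at $0$), and $\tilde\delta_z(f)=\tilde f(z)$ for $z\in X''$. Convolution: $\varphi\ast\psi(f)=\varphi\big(x\mapsto\psi(\tau_xf)\big)$ with $\tau_xf(y)=f(y+x)$. *)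

theory Defs
  imports "HOL-Analysis.Analysis"
begin

class cbanach = banach +
  fixes cscale :: "complex \<Rightarrow> 'a \<Rightarrow> 'a"
  assumes cscale_of_real: "cscale (complex_of_real r) x = scaleR r x"
    and cscale_add_right: "cscale a (x + y) = cscale a x + cscale a y"
    and cscale_add_left: "cscale (a + b) x = cscale a x + cscale b x"
    and cscale_cscale: "cscale a (cscale b x) = cscale (a * b) x"
    and norm_cscale: "norm (cscale a x) = cmod a * norm x"

definition clin_on :: "'v set \<Rightarrow> ('v \<Rightarrow> 'v \<Rightarrow> 'v) \<Rightarrow> (complex \<Rightarrow> 'v \<Rightarrow> 'v) \<Rightarrow> ('v \<Rightarrow> complex) \<Rightarrow> bool" where
  "clin_on S ad sm L \<longleftrightarrow>
     (\<forall>x\<in>S. \<forall>y\<in>S. L (ad x y) = L x + L y) \<and> (\<forall>c. \<forall>x\<in>S. L (sm c x) = c * L x)"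

definition bdd_on :: "'v set \<Rightarrow> ('v \<Rightarrow> real) \<Rightarrow> ('v \<Rightarrow> complex) \<Rightarrow> bool" where
  "bdd_on S N L \<longleftrightarrow> (\<exists>C. \<forall>x\<in>S. cmod (L x) \<le> C * N x)"

text \<open>Continuous complex-linear functionals, represented extensionally (zero off the carrier).\<close>
definition cdual :: "'v set \<Rightarrow> ('v \<Rightarrow> 'v \<Rightarrow> 'v) \<Rightarrow> (complex \<Rightarrow> 'v \<Rightarrow> 'v) \<Rightarrow> ('v \<Rightarrow> real) \<Rightarrow> ('v \<Rightarrow> complex) set" where
  "cdual S ad sm N = {L. clin_on S ad sm L \<and> bdd_on S N L \<and> (\<forall>x. x \<notin> S \<longrightarrow> L x = 0)}"

definition dnorm :: "'v set \<Rightarrow> ('v \<Rightarrow> real) \<Rightarrow> ('v \<Rightarrow> complex) \<Rightarrow> real" where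
  "dnorm S N L = Inf {C. 0 \<le> C \<and> (\<forall>x\<in>S. cmod (L x) \<le> C * N x)}"

definition fadd :: "('v \<Rightarrow> complex) \<Rightarrow> ('v \<Rightarrow> complex) \<Rightarrow> 'v \<Rightarrow> complex" where
  "fadd L M = (\<lambda>x. L x + M x)"

definition fsm :: "complex \<Rightarrow> ('v \<Rightarrow> complex) \<Rightarrow> 'v \<Rightarrow> complex" where
  "fsm c L = (\<lambda>x. c * L x)"

definition Fd :: "('a::cbanach \<Rightarrow> complex) set" where
  "Fd = cdual UNIV (+) cscale norm"

definition FdN :: "('a::cbanach \<Rightarrow> complex) \<Rightarrow> real" where
  "FdN = dnorm UNIV norm"

definition Fdd :: "(('a::cbanach \<Rightarrow> complex) \<Rightarrow> complex) set" where
  "Fdd = cdual Fd fadd fsm FdN"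

definition FddN :: "(('a::cbanach \<Rightarrow> complex) \<Rightarrow> complex) \<Rightarrow> real" where
  "FddN = dnorm Fd FdN"

definition Fddd :: "((('a::cbanach \<Rightarrow> complex) \<Rightarrow> complex) \<Rightarrow> complex) set" where
  "Fddd = cdual Fdd fadd fsm FddN"

definition JF :: "'a::cbanach \<Rightarrow> ('a \<Rightarrow> complex) \<Rightarrow> complex" where
  "JF x = (\<lambda>\<phi>. if \<phi> \<in> Fd then \<phi> x else 0)"

definition JFd :: "('a::cbanach \<Rightarrow> complex) \<Rightarrow> (('a \<Rightarrow> complex) \<Rightarrow> complex) \<Rightarrow> complex" where
  "JFd \<phi> = (\<lambda>u. if u \<in> Fdd then u \<phi> else 0)"

definition Fperp :: "((('a::cbanach \<Rightarrow> complex) \<Rightarrow> complex) \<Rightarrow> complex) set" where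
  "Fperp = {t \<in> Fddd. \<forall>x. t (JF x) = 0}"

definition rho :: "((('a::cbanach \<Rightarrow> complex) \<Rightarrow> complex) \<Rightarrow> complex) \<Rightarrow> ((('a \<Rightarrow> complex) \<Rightarrow> complex) \<Rightarrow> complex)" where
  "rho t = (THE p. p \<in> Fperp \<and> (\<exists>\<phi>\<in>Fd. t = fadd (JFd \<phi>) p))"

type_synonym 'a X = "'a \<times> ('a \<Rightarrow> complex)"

definition Xc :: "('a::cbanach) X set" where
  "Xc = UNIV \<times> Fd"

definition Xadd :: "('a::cbanach) X \<Rightarrow> 'a X \<Rightarrow> 'a X" where
  "Xadd u v = (fst u + fst v, fadd (snd u) (snd v))"

definition Xsm :: "complex \<Rightarrow> ('a::cbanach) X \<Rightarrow> 'a X" where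
  "Xsm c u = (cscale c (fst u), fsm c (snd u))"

definition Xzero :: "('a::cbanach) X" where
  "Xzero = (0, (\<lambda>_. 0))"

definition XN :: "('a::cbanach) X \<Rightarrow> real" where
  "XN u = max (norm (fst u)) (FdN (snd u))"

definition Xd :: "(('a::cbanach) X \<Rightarrow> complex) set" where
  "Xd = cdual Xc Xadd Xsm XN"

definition XdN :: "(('a::cbanach) X \<Rightarrow> complex) \<Rightarrow> real" where
  "XdN = dnorm Xc XN"

definition Xdd :: "((('a::cbanach) X \<Rightarrow> complex) \<Rightarrow> complex) set" where
  "Xdd = cdual Xd fadd fsm XdN"

text \<open>The canonical identification F'' \<oplus> F''' \<cong> X'': (x'',x''')(L) = x''(L \<circ> inl) + x'''(L \<circ> inr).\<close>
definition embX :: "(('a::cbanach \<Rightarrow> complex) \<Rightarrow> complex) \<Rightarrow> ((('a \<Rightarrow> complex) \<Rightarrow> complex) \<Rightarrow> complex)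
                      \<Rightarrow> ('a X \<Rightarrow> complex) \<Rightarrow> complex" where
  "embX x2 x3 = (\<lambda>L. if L \<in> Xd
      then x2 (\<lambda>a. L (a, (\<lambda>_. 0))) + x3 (\<lambda>\<phi>. if \<phi> \<in> Fd then L (0, \<phi>) else 0)
      else 0)"

definition Hb :: "(('a::cbanach) X \<Rightarrow> complex) set" where
  "Hb = {f. (\<forall>x\<in>Xc. \<exists>D\<in>Xd. \<forall>e>0. \<exists>d>0. \<forall>h\<in>Xc. XN h < d \<longrightarrow>
                 cmod (f (Xadd x h) - f x - D h) \<le> e * XN h)
          \<and> (\<forall>r. \<exists>M. \<forall>x\<in>Xc. XN x \<le> r \<longrightarrow> cmod (f x) \<le> M)}"

text \<open>n-th Taylor polynomial at 0: P_n(x) = d^n f(0)(x,\<dots>,x)/n!.\<close>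
definition taylorP :: "(('a::cbanach) X \<Rightarrow> complex) \<Rightarrow> nat \<Rightarrow> 'a X \<Rightarrow> complex" where
  "taylorP f n x = (deriv ^^ n) (\<lambda>t. f (Xsm t x)) 0 / fact n"

definition xsum :: "('a::cbanach) X list \<Rightarrow> 'a X" where
  "xsum xs = foldr Xadd xs Xzero"

text \<open>Symmetric n-linear form of P_n (polarization formula).\<close>
definition symA :: "(('a::cbanach) X \<Rightarrow> complex) \<Rightarrow> nat \<Rightarrow> 'a X list \<Rightarrow> complex" where
  "symA f n xs = (\<Sum>es\<in>{es :: complex list. length es = n \<and> set es \<subseteq> {-1, 1}}.
        prod_list es * taylorP f n (xsum (map2 Xsm es xs))) / (2 ^ n * fact n)"

text \<open>Aron--Berner extension of a multilinear form: the rightmost variable is extended first.\<close>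
fun abext :: "'v set \<Rightarrow> ('v list \<Rightarrow> complex) \<Rightarrow> (('v \<Rightarrow> complex) \<Rightarrow> complex) list \<Rightarrow> complex" where
  "abext S A [] = A []"
| "abext S A (z # zs) = z (\<lambda>x. if x \<in> S then abext S (\<lambda>ys. A (x # ys)) zs else 0)"

definition abf :: "(('a::cbanach) X \<Rightarrow> complex) \<Rightarrow> (('a X \<Rightarrow> complex) \<Rightarrow> complex) \<Rightarrow> complex" where
  "abf f z = (\<Sum>n. abext Xc (symA f n) (replicate n z))"

definition dtilde :: "((('a::cbanach) X \<Rightarrow> complex) \<Rightarrow> complex) \<Rightarrow> ('a X \<Rightarrow> complex) \<Rightarrow> complex" where
  "dtilde z f = abf f z"

definition tau :: "('a::cbanach) X \<Rightarrow> ('a X \<Rightarrow> complex) \<Rightarrow> 'a X \<Rightarrow> complex" where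
  "tau x f = (\<lambda>y. f (Xadd y x))"

definition conv :: "((('a::cbanach) X \<Rightarrow> complex) \<Rightarrow> complex) \<Rightarrow> (('a X \<Rightarrow> complex) \<Rightarrow> complex)
                    \<Rightarrow> ('a X \<Rightarrow> complex) \<Rightarrow> complex" where
  "conv \<phi> \<psi> f = \<phi> (\<lambda>x. \<psi> (tau x f))"

end

(*
  Test the commutation hypothesis on the evaluation pairing f(a, \<phi>) = \<phi>(a), a continuous
  2-homogeneous polynomial on X = F \<oplus> F', hence an entire function of bounded type. For a
  function that is quadratic along rays only the Taylor terms of degree at most two survive in
  the Aron--Berner extension, and computing twice gives
    (\<delta>~(x'',x''') * \<delta>~(y'',y''')) f = Q(y) + x''(y''' o i_F) + x'''(y'') + Q(x),
  where Q(z) is the extended symmetric form of f evaluated at (z, z). The Q-terms do not mix the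
  two points, so commutativity leaves
    x''(y''' o i_F) + x'''(y'') = y''(x''' o i_F) + y'''(x''),
  which is the claim because \<rho>(t) = t - i_{F'}(t o i_F).
*)

theory Submission
  imports Defs
begin

lemma fadd_apply [simp]: "fadd L M x = L x + M x"
  by (simp add: fadd_def)

lemma fsm_apply [simp]: "fsm c L x = c * L x"
  by (simp add: fsm_def)

lemma cdual_add: "L \<in> cdual S ad sm N \<Longrightarrow> x \<in> S \<Longrightarrow> y \<in> S \<Longrightarrow> L (ad x y) = L x + L y"
  by (simp add: cdual_def clin_on_def)

lemma cdual_scale: "L \<in> cdual S ad sm N \<Longrightarrow> x \<in> S \<Longrightarrow> L (sm c x) = c * L x"
  by (simp add: cdual_def clin_on_def)

lemma cdual_outside: "L \<in> cdual S ad sm N \<Longrightarrow> x \<notin> S \<Longrightarrow> L x = 0"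
  by (simp add: cdual_def)

lemma cdual_bound_nonneg:
  assumes "L \<in> cdual S ad sm N" "\<forall>x\<in>S. 0 \<le> N x"
  shows "\<exists>C\<ge>0. \<forall>x\<in>S. cmod (L x) \<le> C * N x"
proof -
  from assms obtain C where C: "\<forall>x\<in>S. cmod (L x) \<le> C * N x"
    unfolding cdual_def bdd_on_def by auto
  have "\<forall>x\<in>S. cmod (L x) \<le> max C 0 * N x"
    using C assms(2) by (smt (verit) mult_right_mono max.cobounded1)
  then show ?thesis by (intro exI[of _ "max C 0"]) auto
qed

lemma dnorm_nonneg:
  assumes "L \<in> cdual S ad sm N" "\<forall>x\<in>S. 0 \<le> N x"
  shows "0 \<le> dnorm S N L"
  using cdual_bound_nonneg[OF assms] unfolding dnorm_def by (intro cInf_greatest) auto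

lemma dnorm_bound:
  assumes "L \<in> cdual S ad sm N" "\<forall>x\<in>S. 0 \<le> N x" "x \<in> S"
  shows "cmod (L x) \<le> dnorm S N L * N x"
proof (cases "N x = 0")
  case True
  then show ?thesis using cdual_bound_nonneg[OF assms(1,2)] assms(3) by force
next
  case False
  then have pos: "N x > 0" using assms by force
  have "cmod (L x) / N x \<le> dnorm S N L"
    unfolding dnorm_def
  proof (rule cInf_greatest)
    show "{C. 0 \<le> C \<and> (\<forall>x\<in>S. cmod (L x) \<le> C * N x)} \<noteq> {}"
      using cdual_bound_nonneg[OF assms(1,2)] by auto
  qed (use pos assms(3) in \<open>auto simp: pos_divide_le_eq\<close>)
  then show ?thesis using pos by (simp add: pos_divide_le_eq)
qed

lemma dnorm_le:
  assumes "0 \<le> C" "\<forall>x\<in>S. cmod (L x) \<le> C * N x"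
  shows "dnorm S N L \<le> C"
  unfolding dnorm_def by (rule cInf_lower) (use assms in \<open>auto intro!: bdd_belowI[of _ 0]\<close>)

lemma cdualI:
  assumes "\<And>x y. x \<in> S \<Longrightarrow> y \<in> S \<Longrightarrow> L (ad x y) = L x + L y"
    and "\<And>c x. x \<in> S \<Longrightarrow> L (sm c x) = c * L x"
    and "\<And>x. x \<in> S \<Longrightarrow> cmod (L x) \<le> C * N x"
    and "\<And>x. x \<notin> S \<Longrightarrow> L x = 0"
  shows "L \<in> cdual S ad sm N"
  using assms unfolding cdual_def clin_on_def bdd_on_def by blast

lemma cdual_fadd:
  assumes "L \<in> cdual S ad sm N" "M \<in> cdual S ad sm N"
  shows "fadd L M \<in> cdual S ad sm N"
proof -
  obtain C1 C2 where C1: "\<forall>x\<in>S. cmod (L x) \<le> C1 * N x" and C2: "\<forall>x\<in>S. cmod (M x) \<le> C2 * N x"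
    using assms unfolding cdual_def bdd_on_def by auto
  show ?thesis
  proof (rule cdualI)
    fix x assume "x \<in> S"
    then have "cmod (L x) + cmod (M x) \<le> C1 * N x + C2 * N x"
      using C1 C2 by (intro add_mono) auto
    then show "cmod (fadd L M x) \<le> (C1 + C2) * N x"
      using norm_triangle_ineq[of "L x" "M x"] by (simp add: distrib_right)
  qed (use assms in \<open>auto simp: cdual_add cdual_scale cdual_outside algebra_simps\<close>)
qed

lemma cdual_fsm:
  assumes "L \<in> cdual S ad sm N"
  shows "fsm c L \<in> cdual S ad sm N"
proof -
  obtain C where C: "\<forall>x\<in>S. cmod (L x) \<le> C * N x"
    using assms unfolding cdual_def bdd_on_def by auto
  show ?thesis
  proof (rule cdualI)
    fix x assume "x \<in> S"
    then show "cmod (fsm c L x) \<le> (cmod c * C) * N x"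
      using C mult_left_mono[of "cmod (L x)" "C * N x" "cmod c"] by (simp add: norm_mult mult.assoc)
  qed (use assms in \<open>auto simp: cdual_add cdual_scale cdual_outside algebra_simps\<close>)
qed

lemma cdual_zero: "(\<lambda>_. 0) \<in> cdual S ad sm N"
  by (rule cdualI[where C = 0]) auto

section \<open>The duals of \<open>F\<close> and the projection \<open>\<rho>\<close>\<close>

lemma cscale_zero [simp]: "cscale 0 x = 0"
  using cscale_of_real[of 0 x] by simp

lemma Fd_add [simp]: "\<phi> \<in> Fd \<Longrightarrow> \<phi> (x + y) = \<phi> x + \<phi> y"
  unfolding Fd_def by (erule cdual_add) auto

lemma Fd_scale [simp]: "\<phi> \<in> Fd \<Longrightarrow> \<phi> (cscale c x) = c * \<phi> x"
  unfolding Fd_def by (erule cdual_scale) auto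

lemma Fd_zero_apply [simp]: "\<phi> \<in> Fd \<Longrightarrow> \<phi> 0 = 0"
  using Fd_scale[of \<phi> 0 0] by simp

lemma Fd_fadd [simp]: "\<phi> \<in> Fd \<Longrightarrow> \<psi> \<in> Fd \<Longrightarrow> fadd \<phi> \<psi> \<in> Fd"
  unfolding Fd_def by (rule cdual_fadd)

lemma Fd_fsm [simp]: "\<phi> \<in> Fd \<Longrightarrow> fsm c \<phi> \<in> Fd"
  unfolding Fd_def by (rule cdual_fsm)

lemma Fd_zero [simp]: "(\<lambda>_. 0) \<in> Fd"
  unfolding Fd_def by (rule cdual_zero)

lemma FdN_nonneg: "\<phi> \<in> Fd \<Longrightarrow> 0 \<le> FdN \<phi>"
  unfolding FdN_def Fd_def by (rule dnorm_nonneg) auto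

lemma Fd_bound: "\<phi> \<in> Fd \<Longrightarrow> cmod (\<phi> a) \<le> FdN \<phi> * norm a"
  unfolding FdN_def Fd_def by (rule dnorm_bound) auto

lemma Fdd_add [simp]: "u \<in> Fdd \<Longrightarrow> \<phi> \<in> Fd \<Longrightarrow> \<psi> \<in> Fd \<Longrightarrow> u (fadd \<phi> \<psi>) = u \<phi> + u \<psi>"
  unfolding Fdd_def by (erule cdual_add)

lemma Fdd_scale [simp]: "u \<in> Fdd \<Longrightarrow> \<phi> \<in> Fd \<Longrightarrow> u (fsm c \<phi>) = c * u \<phi>"
  unfolding Fdd_def by (erule cdual_scale)

lemma Fdd_outside: "u \<in> Fdd \<Longrightarrow> \<phi> \<notin> Fd \<Longrightarrow> u \<phi> = 0"
  unfolding Fdd_def by (erule cdual_outside)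

lemma Fdd_fadd [simp]: "u \<in> Fdd \<Longrightarrow> v \<in> Fdd \<Longrightarrow> fadd u v \<in> Fdd"
  unfolding Fdd_def by (rule cdual_fadd)

lemma Fdd_fsm [simp]: "u \<in> Fdd \<Longrightarrow> fsm c u \<in> Fdd"
  unfolding Fdd_def by (rule cdual_fsm)

lemma Fdd_zero [simp]: "(\<lambda>_. 0) \<in> Fdd"
  unfolding Fdd_def by (rule cdual_zero)

lemma Fdd_zero_apply [simp]: "u \<in> Fdd \<Longrightarrow> u (\<lambda>_. 0) = 0"
  using Fdd_scale[OF _ Fd_zero, of u 0] by (simp add: fsm_def)

lemma FddN_nonneg: "u \<in> Fdd \<Longrightarrow> 0 \<le> FddN u"
  unfolding FddN_def Fdd_def by (rule dnorm_nonneg) (auto simp: FdN_nonneg)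

lemma Fdd_bound: "u \<in> Fdd \<Longrightarrow> \<phi> \<in> Fd \<Longrightarrow> cmod (u \<phi>) \<le> FddN u * FdN \<phi>"
  unfolding FddN_def Fdd_def by (rule dnorm_bound) (auto simp: FdN_nonneg)

lemma Fddd_add [simp]: "t \<in> Fddd \<Longrightarrow> u \<in> Fdd \<Longrightarrow> v \<in> Fdd \<Longrightarrow> t (fadd u v) = t u + t v"
  unfolding Fddd_def by (erule cdual_add)

lemma Fddd_scale [simp]: "t \<in> Fddd \<Longrightarrow> u \<in> Fdd \<Longrightarrow> t (fsm c u) = c * t u"
  unfolding Fddd_def by (erule cdual_scale)

lemma Fddd_zero_apply [simp]: "t \<in> Fddd \<Longrightarrow> t (\<lambda>_. 0) = 0"
  using Fddd_scale[OF _ Fdd_zero, of t 0] by (simp add: fsm_def)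

lemma Fddd_fadd [simp]: "t \<in> Fddd \<Longrightarrow> s \<in> Fddd \<Longrightarrow> fadd t s \<in> Fddd"
  unfolding Fddd_def by (rule cdual_fadd)

lemma Fddd_fsm [simp]: "t \<in> Fddd \<Longrightarrow> fsm c t \<in> Fddd"
  unfolding Fddd_def by (rule cdual_fsm)

lemma Fddd_bound: "t \<in> Fddd \<Longrightarrow> \<exists>C\<ge>0. \<forall>u\<in>Fdd. cmod (t u) \<le> C * FddN u"
  unfolding Fddd_def by (rule cdual_bound_nonneg) (auto simp: FddN_nonneg)

lemma JF_apply [simp]: "\<phi> \<in> Fd \<Longrightarrow> JF a \<phi> = \<phi> a"
  by (simp add: JF_def)

lemma JF_add: "JF (a + b) = fadd (JF a) (JF b)"
  by (rule ext) (simp add: JF_def)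

lemma JF_scale: "JF (cscale c a) = fsm c (JF a)"
  by (rule ext) (simp add: JF_def)

lemma JF_Fdd [simp]: "JF a \<in> Fdd"
  unfolding Fdd_def
  by (rule cdualI[where C = "norm a"]) (auto simp: JF_def Fd_bound mult.commute)

lemma FddN_JF: "FddN (JF a) \<le> norm a"
  unfolding FddN_def by (rule dnorm_le) (auto simp: Fd_bound mult.commute)

lemma Fddd_comp_JF:
  assumes t: "t \<in> Fddd"
  shows "(\<lambda>a. t (JF a)) \<in> Fd"
proof -
  obtain C where C: "C \<ge> 0" "\<forall>u\<in>Fdd. cmod (t u) \<le> C * FddN u"
    using Fddd_bound[OF t] by auto
  show ?thesis
    unfolding Fd_def
  proof (rule cdualI[where C = C])
    fix a :: 'a
    have "cmod (t (JF a)) \<le> C * FddN (JF a)" using C by simp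
    also have "\<dots> \<le> C * norm a" using C(1) FddN_JF by (rule mult_left_mono[rotated])
    finally show "cmod (t (JF a)) \<le> C * norm a" .
  qed (use t in \<open>simp_all add: JF_add JF_scale\<close>)
qed

lemma JFd_apply [simp]: "u \<in> Fdd \<Longrightarrow> JFd \<phi> u = u \<phi>"
  by (simp add: JFd_def)

lemma JFd_Fddd:
  fixes \<phi> :: "'a::cbanach \<Rightarrow> complex"
  assumes "\<phi> \<in> Fd"
  shows "JFd \<phi> \<in> Fddd"
  unfolding Fddd_def
proof (rule cdualI[where C = "FdN \<phi>"])
  fix u :: "('a \<Rightarrow> complex) \<Rightarrow> complex" assume "u \<in> Fdd"
  then show "cmod (JFd \<phi> u) \<le> FdN \<phi> * FddN u"
    using Fdd_bound[OF _ assms] by (simp add: mult.commute)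
qed (use assms in \<open>auto simp: JFd_def\<close>)

lemma rho_apply:
  assumes t: "t \<in> Fddd" and u: "u \<in> Fdd"
  shows "rho t u = t u - u (\<lambda>a. t (JF a))"
proof -
  define \<phi> where "\<phi> = (\<lambda>a. t (JF a))"
  define p where "p = (\<lambda>u. t u - JFd \<phi> u)"
  have \<phi>: "\<phi> \<in> Fd" unfolding \<phi>_def using Fddd_comp_JF[OF t] .
  have "p = fadd t (fsm (-1) (JFd \<phi>))" by (simp add: p_def fun_eq_iff)
  then have "p \<in> Fperp"
    unfolding Fperp_def using t JFd_Fddd[OF \<phi>] \<phi> by (simp add: \<phi>_def)
  moreover have "t = fadd (JFd \<phi>) p" by (simp add: p_def fun_eq_iff)
  moreover have "q = p" if "q \<in> Fperp" "\<psi> \<in> Fd" "t = fadd (JFd \<psi>) q" for q \<psi>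
  proof -
    \<comment> \<open>Evaluating at \<open>JF a\<close> kills \<open>q\<close>, so \<open>\<psi>\<close> must be \<open>\<phi>\<close>.\<close>
    have "\<psi> = \<phi>" using that by (auto simp: \<phi>_def Fperp_def fun_eq_iff)
    then show ?thesis using that(3) by (auto simp: p_def)
  qed
  ultimately have "rho t = p"
    unfolding rho_def using \<phi> by (intro the_equality) blast+
  then show ?thesis using u by (simp add: p_def \<phi>_def)
qed

lemma Xc_iff: "u \<in> Xc \<longleftrightarrow> snd u \<in> Fd"
  by (cases u) (auto simp: Xc_def)

lemma X_ops_simps [simp]:
  "fst (Xsm c u) = cscale c (fst u)" "snd (Xsm c u) = fsm c (snd u)"
  "fst (Xadd u v) = fst u + fst v" "snd (Xadd u v) = fadd (snd u) (snd v)"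
  "fst Xzero = 0" "snd Xzero = (\<lambda>_. 0)"
  by (simp_all add: Xsm_def Xadd_def Xzero_def)

lemma Xadd_Xzero [simp]: "Xadd u Xzero = u"
  by (simp add: Xadd_def Xzero_def fadd_def)

lemma Xadd_Xc [simp]: "u \<in> Xc \<Longrightarrow> v \<in> Xc \<Longrightarrow> Xadd u v \<in> Xc"
  by (simp add: Xc_iff)

lemma Xsm_Xc [simp]: "u \<in> Xc \<Longrightarrow> Xsm c u \<in> Xc"
  by (simp add: Xc_iff)

lemma Xzero_Xc [simp]: "Xzero \<in> Xc"
  by (simp add: Xc_iff)

lemma XN_nonneg: "0 \<le> XN u"
  by (simp add: XN_def le_max_iff_disj)

definition Xlin :: "('a::cbanach \<Rightarrow> complex) \<Rightarrow> (('a \<Rightarrow> complex) \<Rightarrow> complex) \<Rightarrow> 'a X \<Rightarrow> complex" where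
  "Xlin \<alpha> \<beta> = (\<lambda>u. if u \<in> Xc then \<alpha> (fst u) + \<beta> (snd u) else 0)"

lemma Xlin_Xd:
  assumes \<alpha>: "\<alpha> \<in> Fd" and \<beta>: "\<beta> \<in> Fdd"
  shows "Xlin \<alpha> \<beta> \<in> Xd"
  unfolding Xd_def
proof (rule cdualI[where C = "FdN \<alpha> + FddN \<beta>"])
  fix u :: "'a X" assume u: "u \<in> Xc"
  have "cmod (\<alpha> (fst u)) \<le> FdN \<alpha> * XN u"
    by (rule order_trans[OF Fd_bound[OF \<alpha>] mult_left_mono]) (auto simp: XN_def FdN_nonneg \<alpha>)
  moreover have "cmod (\<beta> (snd u)) \<le> FddN \<beta> * XN u"
    using u by (intro order_trans[OF Fdd_bound[OF \<beta>] mult_left_mono])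
      (auto simp: XN_def FddN_nonneg \<beta> Xc_iff)
  ultimately show "cmod (Xlin \<alpha> \<beta> u) \<le> (FdN \<alpha> + FddN \<beta>) * XN u"
    using u norm_triangle_ineq[of "\<alpha> (fst u)" "\<beta> (snd u)"] by (simp add: Xlin_def distrib_right)
qed (use \<alpha> \<beta> in \<open>auto simp: Xlin_def Xadd_def Xsm_def Xc_iff algebra_simps\<close>)

lemma Xlin_scale: "\<alpha> \<in> Fd \<Longrightarrow> \<beta> \<in> Fdd \<Longrightarrow> u \<in> Xc \<Longrightarrow> Xlin \<alpha> \<beta> (Xsm c u) = c * Xlin \<alpha> \<beta> u"
  using Xlin_Xd unfolding Xd_def by (erule cdual_scale)

lemma embX_Xlin:
  assumes "x2 \<in> Fdd" "\<alpha> \<in> Fd" "\<beta> \<in> Fdd"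
  shows "embX x2 x3 (Xlin \<alpha> \<beta>) = x2 \<alpha> + x3 \<beta>"
proof -
  have "(\<lambda>a. Xlin \<alpha> \<beta> (a, \<lambda>_. 0)) = \<alpha>"
    using assms by (auto simp: Xlin_def Xc_iff)
  moreover have "(\<lambda>\<phi>. if \<phi> \<in> Fd then Xlin \<alpha> \<beta> (0, \<phi>) else 0) = \<beta>"
    using assms by (auto simp: Xlin_def Xc_iff fun_eq_iff Fdd_outside)
  ultimately show ?thesis
    using Xlin_Xd[OF assms(2,3)] by (simp add: embX_def)
qed

lemma embX_zero_apply: "x2 \<in> Fdd \<Longrightarrow> x3 \<in> Fddd \<Longrightarrow> embX x2 x3 (\<lambda>_. 0) = 0"
  by (simp add: embX_def)

section \<open>Aron--Berner extension of a quadratic function\<close>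

lemma deriv_quadratic:
  "deriv (\<lambda>t::complex. c + l * t + q * t ^ 2) = (\<lambda>t. l + (2 * q) * t + 0 * t ^ 2)"
  by (rule ext, rule DERIV_imp_deriv) (auto intro!: derivative_eq_intros)

lemma higher_deriv_quadratic_0:
  "(deriv ^^ n) (\<lambda>t::complex. c + l * t + q * t ^ 2) 0
     = (case n of 0 \<Rightarrow> c | Suc 0 \<Rightarrow> l | Suc (Suc 0) \<Rightarrow> 2 * q | _ \<Rightarrow> 0)"
proof (induction n arbitrary: c l q)
  case 0
  then show ?case by simp
next
  case (Suc n)
  have "(deriv ^^ Suc n) (\<lambda>t::complex. c + l * t + q * t ^ 2) 0
      = (deriv ^^ n) (\<lambda>t. l + (2 * q) * t + 0 * t ^ 2) 0"
    by (simp only: funpow_Suc_right o_apply deriv_quadratic)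
  also have "\<dots> = (case n of 0 \<Rightarrow> l | Suc 0 \<Rightarrow> 2 * q | Suc (Suc 0) \<Rightarrow> 2 * 0 | _ \<Rightarrow> 0)"
    by (rule Suc.IH)
  finally show ?case by (simp split: nat.split)
qed

lemma taylorP_quadratic:
  assumes "\<And>t. g (Xsm t u) = c + l * t + q * t ^ 2"
  shows "taylorP g n u = (case n of 0 \<Rightarrow> c | Suc 0 \<Rightarrow> l | Suc (Suc 0) \<Rightarrow> q | _ \<Rightarrow> 0)"
  unfolding taylorP_def assms higher_deriv_quadratic_0 by (simp split: nat.split)

lemma xsum_Xc: "set xs \<subseteq> Xc \<Longrightarrow> xsum (map2 Xsm es xs) \<in> Xc"
proof (induction xs arbitrary: es)
  case Nil
  then show ?case by (simp add: xsum_def)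
next
  case (Cons x xs)
  then show ?case by (cases es) (auto simp: xsum_def)
qed

lemma sign_lists_0: "{es :: complex list. length es = 0 \<and> set es \<subseteq> {-1, 1}} = {[]}"
  by auto

lemma sign_lists_1: "{es :: complex list. length es = 1 \<and> set es \<subseteq> {-1, 1}} = {[-1], [1]}"
  by (auto simp: length_Suc_conv)

lemma sign_lists_2:
  "{es :: complex list. length es = 2 \<and> set es \<subseteq> {-1, 1}} = {[-1, -1], [-1, 1], [1, -1], [1, 1]}"
  by (auto simp: length_Suc_conv numeral_2_eq_2)

lemma symA_vanishing:
  assumes "\<And>u. u \<in> Xc \<Longrightarrow> taylorP g n u = 0" and "set xs \<subseteq> Xc"
  shows "symA g n xs = 0"
  by (simp add: symA_def assms(1) xsum_Xc[OF assms(2)])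

lemma symA_0: "symA g 0 [] = taylorP g 0 Xzero"
  unfolding symA_def sign_lists_0 by (simp add: xsum_def)

lemma symA_1:
  assumes "\<And>e. taylorP g 1 (Xsm e x) = e * L"
  shows "symA g 1 [x] = L"
  using assms[of 1] assms[of "-1"] unfolding symA_def sign_lists_1 by (simp add: xsum_def)

lemma symA_2_polarization:
  assumes "\<And>e1 e2. taylorP g 2 (Xadd (Xsm e1 x) (Xsm e2 y)) = e1 ^ 2 * a + e2 ^ 2 * b + 2 * e1 * e2 * B"
  shows "symA g 2 [x, y] = B"
  unfolding symA_def sign_lists_2 by (simp add: assms xsum_def algebra_simps)

lemma abext_vanishing:
  assumes "\<And>xs. set xs \<subseteq> S \<Longrightarrow> length xs = length zs \<Longrightarrow> A xs = 0"
    and "\<forall>z\<in>set zs. z (\<lambda>_. 0) = 0"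
  shows "abext S A zs = 0"
  using assms
proof (induction zs arbitrary: A)
  case Nil
  then show ?case by simp
next
  case (Cons z zs)
  have "(\<lambda>x. if x \<in> S then abext S (\<lambda>ys. A (x # ys)) zs else 0) = (\<lambda>_. 0)"
    using Cons.IH Cons.prems by auto
  then show ?case using Cons.prems by simp
qed

lemma abf_quadratic:
  assumes z: "z (\<lambda>_. 0) = 0"
    and ray: "\<And>u t. u \<in> Xc \<Longrightarrow> g (Xsm t u) = c + l u * t + q u * t ^ 2"
    and l: "l \<in> Xd"
    and q: "\<And>x y e1 e2. x \<in> Xc \<Longrightarrow> y \<in> Xc \<Longrightarrow>
      q (Xadd (Xsm e1 x) (Xsm e2 y)) = e1 ^ 2 * q x + e2 ^ 2 * q y + 2 * e1 * e2 * B x y"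
  shows "abf g z = c + z l + z (\<lambda>x. if x \<in> Xc then z (\<lambda>y. if y \<in> Xc then B x y else 0) else 0)"
proof -
  have taylor: "taylorP g n u = (case n of 0 \<Rightarrow> c | Suc 0 \<Rightarrow> l u | Suc (Suc 0) \<Rightarrow> q u | _ \<Rightarrow> 0)"
    if "u \<in> Xc" for n u
    using ray[OF that] by (rule taylorP_quadratic)
  define T where "T n = abext Xc (symA g n) (replicate n z)" for n
  have "T n = 0" if "n \<notin> {0, 1, 2}" for n
    unfolding T_def using that z
    by (intro abext_vanishing symA_vanishing) (auto simp: taylor split: nat.split)
  then have "abf g z = T 0 + T 1 + T 2"
    unfolding abf_def T_def[symmetric] by (subst suminf_finite[of "{0, 1, 2}"]) auto
  also have "T 0 = c"
    by (simp add: T_def symA_0 taylor)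
  also have "T 1 = z l"
  proof -
    have "symA g 1 [x] = l x" if "x \<in> Xc" for x
      using that l by (intro symA_1) (simp add: taylor Xd_def cdual_scale)
    then have "(\<lambda>x. if x \<in> Xc then symA g 1 [x] else 0) = l"
      using l by (auto simp: Xd_def cdual_outside)
    moreover have "T 1 = z (\<lambda>x. if x \<in> Xc then symA g 1 [x] else 0)"
      by (simp add: T_def cong: if_cong)
    ultimately show ?thesis by simp
  qed
  also have "T 2 = z (\<lambda>x. if x \<in> Xc then z (\<lambda>y. if y \<in> Xc then B x y else 0) else 0)"
  proof -
    have "symA g 2 [x, y] = B x y" if "x \<in> Xc" "y \<in> Xc" for x y
      using that by (intro symA_2_polarization) (simp add: taylor q numeral_2_eq_2)
    then show ?thesis by (simp add: T_def numeral_2_eq_2 cong: if_cong)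
  qed
  finally show ?thesis .
qed

section \<open>The evaluation pairing as a test function\<close>

definition pairing :: "'a::cbanach X \<Rightarrow> complex" where
  "pairing u = snd u (fst u)"

definition pairing_polar :: "'a::cbanach X \<Rightarrow> 'a X \<Rightarrow> complex" where
  "pairing_polar x y = (snd x (fst y) + snd y (fst x)) / 2"

definition pairing_polar_ext :: "(('a::cbanach X \<Rightarrow> complex) \<Rightarrow> complex) \<Rightarrow> complex" where
  "pairing_polar_ext z = z (\<lambda>x. if x \<in> Xc then z (\<lambda>y. if y \<in> Xc then pairing_polar x y else 0) else 0)"

lemma pairing_polarization:
  assumes "x \<in> Xc" "y \<in> Xc"
  shows "pairing (Xadd (Xsm e1 x) (Xsm e2 y))
    = e1 ^ 2 * pairing x + e2 ^ 2 * pairing y + 2 * e1 * e2 * pairing_polar x y"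
  using assms by (simp add: Xc_iff pairing_def pairing_polar_def algebra_simps power2_eq_square)

lemma pairing_translate_ray:
  assumes "x \<in> Xc" "u \<in> Xc"
  shows "tau x pairing (Xsm t u) = pairing x + Xlin (snd x) (JF (fst x)) u * t + pairing u * t ^ 2"
  using assms by (simp add: tau_def pairing_def Xlin_def Xc_iff algebra_simps power2_eq_square)

lemma pairing_bound:
  assumes "u \<in> Xc"
  shows "cmod (pairing u) \<le> XN u * XN u"
proof -
  have "cmod (pairing u) \<le> FdN (snd u) * norm (fst u)"
    using assms by (simp add: pairing_def Fd_bound Xc_iff)
  also have "\<dots> \<le> XN u * XN u"
    by (rule mult_mono) (auto simp: XN_def le_max_iff_disj)
  finally show ?thesis .
qed

lemma pairing_differentiable:
  assumes x: "x \<in> Xc"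
  shows "\<exists>D\<in>Xd. \<forall>e>0. \<exists>d>0. \<forall>h\<in>Xc. XN h < d \<longrightarrow>
           cmod (pairing (Xadd x h) - pairing x - D h) \<le> e * XN h"
proof (intro bexI allI impI)
  let ?D = "Xlin (snd x) (JF (fst x))"
  show "?D \<in> Xd" using x by (intro Xlin_Xd) (simp_all add: Xc_iff)
  fix e :: real assume "e > 0"
  have "cmod (pairing (Xadd x h) - pairing x - ?D h) \<le> e * XN h" if h: "h \<in> Xc" "XN h < e" for h
  proof -
    have "pairing (Xadd x h) - pairing x - ?D h = pairing h"
      using x h by (simp add: pairing_def Xlin_def Xc_iff)
    moreover have "XN h * XN h \<le> e * XN h"
      using h XN_nonneg[of h] by (intro mult_right_mono) auto
    ultimately show ?thesis using pairing_bound[OF h(1)] by simp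
  qed
  then show "\<exists>d>0. \<forall>h\<in>Xc. XN h < d \<longrightarrow> cmod (pairing (Xadd x h) - pairing x - ?D h) \<le> e * XN h"
    using \<open>e > 0\<close> by blast
qed

lemma pairing_Hb: "(pairing :: 'a::cbanach X \<Rightarrow> complex) \<in> Hb"
proof -
  have "\<exists>M. \<forall>x\<in>Xc. XN x \<le> r \<longrightarrow> cmod (pairing (x :: 'a X)) \<le> M" for r
  proof (intro exI[of _ "r * r"] ballI impI)
    fix x :: "'a X" assume "x \<in> Xc" "XN x \<le> r"
    then show "cmod (pairing x) \<le> r * r"
      using pairing_bound[of x] mult_mono[of "XN x" r "XN x" r] XN_nonneg[of x] by simp
  qed
  then show ?thesis
    unfolding Hb_def using pairing_differentiable by blast
qed

lemma abf_translate_pairing: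
  assumes y2: "y2 \<in> Fdd" and y3: "y3 \<in> Fddd" and x: "x \<in> Xc"
  shows "abf (tau x pairing) (embX y2 y3)
    = pairing_polar_ext (embX y2 y3) + Xlin (\<lambda>a. y3 (JF a)) y2 x + pairing x"
proof -
  have "abf (tau x pairing) (embX y2 y3)
      = pairing x + embX y2 y3 (Xlin (snd x) (JF (fst x))) + pairing_polar_ext (embX y2 y3)"
    unfolding pairing_polar_ext_def
  proof (rule abf_quadratic[where q = pairing])
    show "Xlin (snd x) (JF (fst x)) \<in> Xd" using x by (intro Xlin_Xd) (simp_all add: Xc_iff)
  qed (use y2 y3 x in \<open>simp_all add: embX_zero_apply pairing_translate_ray pairing_polarization\<close>)
  also have "embX y2 y3 (Xlin (snd x) (JF (fst x))) = y2 (snd x) + y3 (JF (fst x))"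
    using y2 x by (intro embX_Xlin) (simp_all add: Xc_iff)
  finally show ?thesis
    using x by (simp add: Xlin_def)
qed

lemma conv_pairing:
  assumes x2: "x2 \<in> Fdd" and x3: "x3 \<in> Fddd" and y2: "y2 \<in> Fdd" and y3: "y3 \<in> Fddd"
  shows "conv (dtilde (embX x2 x3)) (dtilde (embX y2 y3)) pairing
    = pairing_polar_ext (embX y2 y3) + (x2 (\<lambda>a. y3 (JF a)) + x3 y2) + pairing_polar_ext (embX x2 x3)"
proof -
  let ?l = "Xlin (\<lambda>a. y3 (JF a)) y2"
  have l: "?l \<in> Xd" using y2 y3 by (intro Xlin_Xd Fddd_comp_JF)
  have "conv (dtilde (embX x2 x3)) (dtilde (embX y2 y3)) pairing
      = abf (\<lambda>x. abf (tau x pairing) (embX y2 y3)) (embX x2 x3)"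
    by (simp add: conv_def dtilde_def)
  also have "\<dots> = pairing_polar_ext (embX y2 y3) + embX x2 x3 ?l + pairing_polar_ext (embX x2 x3)"
    unfolding pairing_polar_ext_def[of "embX x2 x3"]
  proof (rule abf_quadratic[where q = pairing, OF _ _ l])
    fix u :: "'a X" and t assume u: "u \<in> Xc"
    have "pairing (Xsm t u) = pairing u * t ^ 2"
      using u by (simp add: pairing_def Xc_iff power2_eq_square)
    then show "abf (tau (Xsm t u) pairing) (embX y2 y3) = pairing_polar_ext (embX y2 y3) + ?l u * t + pairing u * t ^ 2"
      using u y2 y3 by (simp add: abf_translate_pairing Xlin_scale Fddd_comp_JF)
  qed (use x2 x3 in \<open>simp_all add: embX_zero_apply pairing_polarization\<close>)
  also have "embX x2 x3 ?l = x2 (\<lambda>a. y3 (JF a)) + x3 y2"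
    using x2 y2 y3 by (intro embX_Xlin Fddd_comp_JF)
  finally show ?thesis .
qed

theorem lemma2p6:
  fixes x2 y2 :: "('a::cbanach \<Rightarrow> complex) \<Rightarrow> complex"
    and x3 y3 :: "(('a \<Rightarrow> complex) \<Rightarrow> complex) \<Rightarrow> complex"
  assumes "x2 \<in> Fdd" and "y2 \<in> Fdd" and "x3 \<in> Fddd" and "y3 \<in> Fddd"
    and "\<forall>f\<in>Hb. conv (dtilde (embX x2 x3)) (dtilde (embX y2 y3)) f
              = conv (dtilde (embX y2 y3)) (dtilde (embX x2 x3)) f"
  shows "rho x3 y2 = rho y3 x2"
proof -
  have "conv (dtilde (embX x2 x3)) (dtilde (embX y2 y3)) pairing
      = conv (dtilde (embX y2 y3)) (dtilde (embX x2 x3)) pairing"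
    using assms(5) pairing_Hb by blast
  then have "x2 (\<lambda>a. y3 (JF a)) + x3 y2 = y2 (\<lambda>a. x3 (JF a)) + y3 x2"
    using conv_pairing[OF assms(1,3,2,4)] conv_pairing[OF assms(2,4,1,3)] by simp
  then show ?thesis
    using assms(1-4) by (simp add: rho_apply algebra_simps)
qed

end
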